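(* Let $N$ be a tree rooted at $g$ with positive edge capacities $c_e$, and let $T$ be the tree obtained from $N$ by the procedure Create-Binary-Tree described in the context. Let $G_R$ be any request graph on $V\cup\{g\}$ with bandwidths $f_e$. Then $N$ and $T$ have the same set of leaves $L$, and for every embedding $\pi:V\to L$ (with $\pi(g)=g$), the congestion of $\pi$ as an embedding into $N$ equals the congestion of $\pi$ as an embedding into $T$. In particular, the minimum congestion of embedding $G_R$ into $N$ equals the minimum congestion of embedding $G_R$ into $T$.
   Context: Create-Binary-Tree$(N,g)$: for every node $v$ of $N$ with degree greater than $3$, let $u_1,\dots,u_d$ be the children of $v$ and $e_1,\dots,e_d$ the edges joining $v$ to $u_1,\dots,u_d$; replace $e_1,\dots,e_d$ by a (complete) binary tree rooted at $v$ whose leaves are $u_1,\dots,u_d$, where the new intermediate nodes are auxiliary (non-leaf) nodes; set the capacity of the edge from $u_i$ to its new parent equal to $c_{e_i}$, and the capacity of every other new edge equal to $\infty$. The request graph $G_R$ has vertex set $V\cup\{g\}$, $V=\{v_1,\dots,v_k\}$ virtual machines, edges $(v_i,g)$ or $(v_i,v_j)$ with bandwidths $f_e\ge0$. An embedding is an injective map $\pi:V\to L$ into the leaves, with $\pi(g)=g$. For a host tree $H$ and edge $e$ of $H$, $\mathrm{cong}(\pi,e)=\frac1{c_e}\sum f_{(u,v)}$ over request edges $(u,v)$ whose path in $H$ between $\pi(u)$ and $\pi(v)$ contains $e$ (an edge of capacity $\infty$ has congestion $0$); the congestion of $\pi$ is the maximum over edges of $H$. *)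

theory Defs
  imports Complex_Main "HOL-Library.Extended_Real"
begin

text \<open>A rooted tree: finite node set Nd, root g, parent function par.
  Every non-root node w determines the edge (w, par w); edges are thus
  identified with the non-root nodes.\<close>

definition rooted_tree :: "'n set \<Rightarrow> ('n \<Rightarrow> 'n) \<Rightarrow> 'n \<Rightarrow> bool" where
  "rooted_tree Nd par g \<longleftrightarrow> finite Nd \<and> g \<in> Nd \<and> par g = g \<and>
     (\<forall>v\<in>Nd - {g}. par v \<in> Nd) \<and> (\<forall>v\<in>Nd. \<exists>k. (par ^^ k) v = g)"

definition children :: "'n set \<Rightarrow> ('n \<Rightarrow> 'n) \<Rightarrow> 'n \<Rightarrow> 'n \<Rightarrow> 'n set" where
  "children Nd par g v = {u \<in> Nd - {g}. par u = v}"

definition degree :: "'n set \<Rightarrow> ('n \<Rightarrow> 'n) \<Rightarrow> 'n \<Rightarrow> 'n \<Rightarrow> nat" where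
  "degree Nd par g v = card (children Nd par g v) + (if v = g then 0 else 1)"

definition leaves :: "'n set \<Rightarrow> ('n \<Rightarrow> 'n) \<Rightarrow> 'n \<Rightarrow> 'n set" where
  "leaves Nd par g = {u \<in> Nd - {g}. children Nd par g u = {}}"

definition anc :: "('n \<Rightarrow> 'n) \<Rightarrow> 'n \<Rightarrow> 'n \<Rightarrow> bool" where
  "anc par w x \<longleftrightarrow> (\<exists>k. (par ^^ k) x = w)"

text \<open>The edge (w, par w) lies on the tree path between x and y iff w is an
  ancestor-or-self of exactly one of x, y.\<close>
definition on_path :: "('n \<Rightarrow> 'n) \<Rightarrow> 'n \<Rightarrow> 'n \<Rightarrow> 'n \<Rightarrow> bool" where
  "on_path par w x y \<longleftrightarrow> anc par w x \<noteq> anc par w y"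

text \<open>Request vertices have type 'v option: Some v is a virtual machine, None is g.
  An embedding pi : V \<rightarrow> L is extended by pi(g) = g via case_option g pi.\<close>

definition request_graph :: "'v set \<Rightarrow> ('v option \<times> 'v option) set \<Rightarrow>
    ('v option \<times> 'v option \<Rightarrow> real) \<Rightarrow> bool" where
  "request_graph V ER f \<longleftrightarrow> finite V \<and> finite ER \<and>
     ER \<subseteq> (Some ` V) \<times> (insert None (Some ` V)) \<and>
     (\<forall>(a,b)\<in>ER. a \<noteq> b) \<and> (\<forall>e\<in>ER. f e \<ge> 0)"

definition embedding :: "'n set \<Rightarrow> ('n \<Rightarrow> 'n) \<Rightarrow> 'n \<Rightarrow> 'v set \<Rightarrow> ('v \<Rightarrow> 'n) \<Rightarrow> bool" where
  "embedding Nd par g V \<pi> \<longleftrightarrow> inj_on \<pi> V \<and> \<pi> ` V \<subseteq> leaves Nd par g"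

definition load :: "('n \<Rightarrow> 'n) \<Rightarrow> ('v option \<times> 'v option) set \<Rightarrow>
    ('v option \<times> 'v option \<Rightarrow> real) \<Rightarrow> ('v option \<Rightarrow> 'n) \<Rightarrow> 'n \<Rightarrow> real" where
  "load par ER f pos w = (\<Sum>e\<in>ER. if on_path par w (pos (fst e)) (pos (snd e)) then f e else 0)"

definition edge_cong :: "('n \<Rightarrow> 'n) \<Rightarrow> ('n \<Rightarrow> ereal) \<Rightarrow> ('v option \<times> 'v option) set \<Rightarrow>
    ('v option \<times> 'v option \<Rightarrow> real) \<Rightarrow> ('v option \<Rightarrow> 'n) \<Rightarrow> 'n \<Rightarrow> real" where
  "edge_cong par cap ER f pos w =
     (if cap w = \<infinity> then 0 else load par ER f pos w / real_of_ereal (cap w))"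

definition congestion :: "'n set \<Rightarrow> ('n \<Rightarrow> 'n) \<Rightarrow> 'n \<Rightarrow> ('n \<Rightarrow> ereal) \<Rightarrow>
    ('v option \<times> 'v option) set \<Rightarrow> ('v option \<times> 'v option \<Rightarrow> real) \<Rightarrow> ('v \<Rightarrow> 'n) \<Rightarrow> real" where
  "congestion Nd par g cap ER f \<pi> =
     Max (insert 0 (edge_cong par cap ER f (case_option g \<pi>) ` (Nd - {g})))"

definition min_congestion :: "'n set \<Rightarrow> ('n \<Rightarrow> 'n) \<Rightarrow> 'n \<Rightarrow> ('n \<Rightarrow> ereal) \<Rightarrow> 'v set \<Rightarrow>
    ('v option \<times> 'v option) set \<Rightarrow> ('v option \<times> 'v option \<Rightarrow> real) \<Rightarrow> real" where
  "min_congestion Nd par g cap V ER f =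
     (INF \<pi> \<in> {\<pi>. embedding Nd par g V \<pi>}. congestion Nd par g cap ER f \<pi>)"

text \<open>The children of a node v are numbered 1..d by idx (an arbitrary
  ordering, a parameter of the procedure). If degree v > 3, the star from v
  to its d children is replaced by the complete binary tree in heap layout:
  positions 1..2d-1, parent of position p is p div 2, position 1 is v itself,
  positions 2..d-1 are new auxiliary nodes Inr (v,p), and child number i sits
  at leaf position d-1+i.\<close>

definition big :: "'n set \<Rightarrow> ('n \<Rightarrow> 'n) \<Rightarrow> 'n \<Rightarrow> 'n \<Rightarrow> bool" where
  "big Nd par g v \<longleftrightarrow> v \<in> Nd \<and> degree Nd par g v > 3"

definition heap_node :: "'n \<Rightarrow> nat \<Rightarrow> 'n + ('n \<times> nat)" where
  "heap_node v p = (if p = 1 then Inl v else Inr (v, p))"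

definition bin_nodes :: "'n set \<Rightarrow> ('n \<Rightarrow> 'n) \<Rightarrow> 'n \<Rightarrow> ('n + ('n \<times> nat)) set" where
  "bin_nodes Nd par g = Inl ` Nd \<union>
     {Inr (v, p) | v p. big Nd par g v \<and> 2 \<le> p \<and> p \<le> card (children Nd par g v) - 1}"

fun bin_par :: "'n set \<Rightarrow> ('n \<Rightarrow> 'n) \<Rightarrow> 'n \<Rightarrow> ('n \<Rightarrow> nat) \<Rightarrow>
    'n + ('n \<times> nat) \<Rightarrow> 'n + ('n \<times> nat)" where
  "bin_par Nd par g idx (Inl u) =
     (if u \<noteq> g \<and> big Nd par g (par u)
      then heap_node (par u) ((card (children Nd par g (par u)) - 1 + idx u) div 2)
      else Inl (par u))"
| "bin_par Nd par g idx (Inr (v, p)) = heap_node v (p div 2)"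

fun bin_cap :: "('n \<Rightarrow> real) \<Rightarrow> 'n + ('n \<times> nat) \<Rightarrow> ereal" where
  "bin_cap c (Inl u) = ereal (c u)"
| "bin_cap c (Inr _) = \<infinity>"

end

theory Submission
  imports Defs
begin

text \<open>Binarization only subdivides the stars below high-degree nodes: the walk towards the
  root from an original node x in the new tree visits exactly the original ancestors of x,
  interleaved with auxiliary heap nodes. Hence the edge above an original node w lies on the
  path between two original nodes in the new tree iff it does in the old one; as it keeps its
  capacity, it carries the same congestion, while the new edges have infinite capacity and
  congestion 0. Leaves are preserved since every heap position has a child (a deeper heap
  position or an original child), and an original node gains children only if it had some.\<close>

lemma heap_node_eq_Inl_iff: "heap_node v p = Inl u \<longleftrightarrow> p = 1 \<and> v = u"
  by (auto simp: heap_node_def)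

lemma big_imp_card_children_ge: "big Nd par g v \<Longrightarrow> card (children Nd par g v) \<ge> 3"
  by (auto simp: big_def degree_def split: if_splits)

lemma rooted_tree_funpow_par_in:
  assumes "rooted_tree Nd par g" "x \<in> Nd"
  shows "(par ^^ k) x \<in> Nd"
proof (induction k)
  case (Suc k)
  then show ?case using assms(1) unfolding rooted_tree_def
    by (cases "(par ^^ k) x = g") auto
qed (use assms in simp)

lemma anc_refl: "anc f x x"
  unfolding anc_def by (metis funpow_0)

lemma anc_trans: "anc f a b \<Longrightarrow> anc f b c \<Longrightarrow> anc f a c"
  unfolding anc_def by (metis funpow_add comp_apply)

lemma anc_step: "anc f (f x) x"
  unfolding anc_def by (rule exI[of _ 1]) simp

lemma funpow_bin_par_Inl:
  "\<exists>m. (bin_par Nd par g idx ^^ n) (Inl x) = Inl ((par ^^ m) x)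
     \<or> (\<exists>p. (bin_par Nd par g idx ^^ n) (Inl x) = Inr ((par ^^ Suc m) x, p))"
proof (induction n)
  case 0
  show ?case by (rule exI[of _ 0]) simp
next
  case (Suc n)
  then obtain m where
    "(bin_par Nd par g idx ^^ n) (Inl x) = Inl ((par ^^ m) x)
     \<or> (\<exists>p. (bin_par Nd par g idx ^^ n) (Inl x) = Inr ((par ^^ Suc m) x, p))"
    by blast
  then consider
      (orig) "(bin_par Nd par g idx ^^ n) (Inl x) = Inl ((par ^^ m) x)"
    | (heap) p where "(bin_par Nd par g idx ^^ n) (Inl x) = Inr ((par ^^ Suc m) x, p)"
    by blast
  then show ?case
  proof cases
    case orig
    then show ?thesis
      by (cases "(par ^^ m) x \<noteq> g \<and> big Nd par g (par ((par ^^ m) x))")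
        (auto simp: heap_node_def intro: exI[of _ m] exI[of _ "Suc m"])
  next
    case heap
    then show ?thesis
      by (auto simp: heap_node_def intro: exI[of _ m] exI[of _ "Suc m"])
  qed
qed

lemma anc_bin_par_Inl_imp_anc:
  assumes "anc (bin_par Nd par g idx) (Inl w) (Inl x)"
  shows "anc par w x"
proof -
  obtain k where k: "(bin_par Nd par g idx ^^ k) (Inl x) = Inl w"
    using assms unfolding anc_def by blast
  obtain m where "(bin_par Nd par g idx ^^ k) (Inl x) = Inl ((par ^^ m) x)
     \<or> (\<exists>p. (bin_par Nd par g idx ^^ k) (Inl x) = Inr ((par ^^ Suc m) x, p))"
    using funpow_bin_par_Inl[where Nd = Nd and par = par and g = g and idx = idx and n = k]
    by blast
  then have "(par ^^ m) x = w" using k by auto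
  then show ?thesis unfolding anc_def by blast
qed

lemma anc_bin_par_heap_node:
  assumes "1 \<le> p"
  shows "anc (bin_par Nd par g idx) (Inl v) (heap_node v p)"
  using assms
proof (induction p rule: less_induct)
  case (less p)
  show ?case
  proof (cases "p = 1")
    case True
    then show ?thesis by (simp add: heap_node_def anc_refl)
  next
    case False
    then have "anc (bin_par Nd par g idx) (Inl v) (heap_node v (p div 2))"
      using less by simp
    moreover have "bin_par Nd par g idx (heap_node v p) = heap_node v (p div 2)"
      using False by (simp add: heap_node_def)
    ultimately show ?thesis by (metis anc_step anc_trans)
  qed
qed

lemma congestion_cong:
  assumes "ER \<subseteq> Some ` V \<times> insert None (Some ` V)" and "\<forall>v\<in>V. \<pi> v = \<pi>' v"
  shows "congestion Nd par g cap ER f \<pi> = congestion Nd par g cap ER f \<pi>'"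
proof -
  have "load par ER f (case_option g \<pi>) w = load par ER f (case_option g \<pi>') w" for w
    unfolding load_def by (rule sum.cong) (use assms in fastforce)+
  then show ?thesis unfolding congestion_def edge_cong_def by simp
qed

locale binarization =
  fixes Nd :: "'n set" and par :: "'n \<Rightarrow> 'n" and g :: 'n and idx :: "'n \<Rightarrow> nat"
  assumes tree: "rooted_tree Nd par g"
    and idx_bij: "\<forall>v\<in>Nd. bij_betw idx (children Nd par g v) {1..card (children Nd par g v)}"
begin

abbreviation "T_nodes \<equiv> bin_nodes Nd par g"
abbreviation "T_par \<equiv> bin_par Nd par g idx"

lemma g_in: "g \<in> Nd"
  using tree by (simp add: rooted_tree_def)

lemma idx_children:
  assumes "u \<in> Nd" "u \<noteq> g"
  shows "idx u \<in> {1..card (children Nd par g (par u))}"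
proof -
  have "par u \<in> Nd" using rooted_tree_funpow_par_in[OF tree assms(1), of 1] by simp
  moreover have "u \<in> children Nd par g (par u)" using assms by (simp add: children_def)
  ultimately show ?thesis using idx_bij bij_betwE by blast
qed

lemma anc_bin_par_par:
  assumes "u \<in> Nd"
  shows "anc T_par (Inl (par u)) (Inl u)"
proof (cases "u \<noteq> g \<and> big Nd par g (par u)")
  case True
  let ?d = "card (children Nd par g (par u))"
  have "?d \<ge> 3" using True big_imp_card_children_ge[of Nd par g "par u"] by simp
  then have "1 \<le> (?d - 1 + idx u) div 2" using idx_children[OF assms] True by auto
  then have "anc T_par (Inl (par u)) (T_par (Inl u))"
    using True by (simp add: anc_bin_par_heap_node)
  then show ?thesis by (metis anc_step anc_trans)
next
  case False
  then show ?thesis using anc_step[of T_par "Inl u"] by auto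
qed

lemma anc_bin_par_funpow:
  assumes "x \<in> Nd"
  shows "anc T_par (Inl ((par ^^ k) x)) (Inl x)"
proof (induction k)
  case (Suc k)
  have "anc T_par (Inl (par ((par ^^ k) x))) (Inl ((par ^^ k) x))"
    using anc_bin_par_par rooted_tree_funpow_par_in[OF tree assms] by blast
  then show ?case using Suc anc_trans by fastforce
qed (simp add: anc_refl)

lemma anc_bin_par_Inl_iff:
  assumes "x \<in> Nd"
  shows "anc T_par (Inl w) (Inl x) \<longleftrightarrow> anc par w x"
proof
  show "anc par w x" if "anc T_par (Inl w) (Inl x)"
    using that by (rule anc_bin_par_Inl_imp_anc)
  show "anc T_par (Inl w) (Inl x)" if "anc par w x"
    using that anc_bin_par_funpow[OF assms] unfolding anc_def[of par] by blast
qed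

lemma Inr_in_bin_nodes_has_child:
  assumes "Inr (v, p) \<in> T_nodes"
  shows "children T_nodes T_par (Inl g) (Inr (v, p)) \<noteq> {}"
proof -
  let ?d = "card (children Nd par g v)"
  have v: "big Nd par g v" "2 \<le> p" "p \<le> ?d - 1"
    using assms by (auto simp: bin_nodes_def)
  have d: "?d \<ge> 3" using v(1) by (rule big_imp_card_children_ge)
  have hp: "heap_node v p = Inr (v, p)" using v by (simp add: heap_node_def)
  show ?thesis
  proof (cases "2 * p \<le> ?d - 1")
    case True
    then have "Inr (v, 2 * p) \<in> children T_nodes T_par (Inl g) (Inr (v, p))"
      using v hp by (auto simp: bin_nodes_def children_def)
    then show ?thesis by blast
  next
    case False
    \<comment> \<open>heap position 2p is the leaf position of child number 2p + 1 - d\<close>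
    have "2 * p + 1 - ?d \<in> idx ` children Nd par g v"
      using idx_bij v False d by (auto simp: big_def bij_betw_def)
    then obtain u where u: "u \<in> children Nd par g v" "idx u = 2 * p + 1 - ?d" by (elim imageE) simp
    then have "(?d - 1 + idx u) div 2 = p" using False d by simp
    then have "Inl u \<in> children T_nodes T_par (Inl g) (Inr (v, p))"
      using u(1) v(1) hp by (auto simp: children_def bin_nodes_def)
    then show ?thesis by blast
  qed
qed

lemma children_bin_Inl_eq_empty_iff:
  assumes "u \<in> Nd"
  shows "children T_nodes T_par (Inl g) (Inl u) = {} \<longleftrightarrow> children Nd par g u = {}"
proof
  assume empty: "children T_nodes T_par (Inl g) (Inl u) = {}"
  show "children Nd par g u = {}"
  proof (cases "big Nd par g u")
    case True
    then have "Inr (u, 2) \<in> children T_nodes T_par (Inl g) (Inl u)"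
      using big_imp_card_children_ge[OF True]
      by (auto simp: bin_nodes_def children_def heap_node_def)
    with empty show ?thesis by blast
  next
    case False
    have "Inl w \<in> children T_nodes T_par (Inl g) (Inl u)" if "w \<in> children Nd par g u" for w
      using that False by (auto simp: bin_nodes_def children_def)
    with empty show ?thesis by blast
  qed
next
  assume empty: "children Nd par g u = {}"
  then have not_big: "\<not> big Nd par g u"
    using big_imp_card_children_ge by fastforce
  have "T_par y \<noteq> Inl u" if "y \<in> T_nodes" "y \<noteq> Inl g" for y
  proof (cases y)
    case (Inl w)
    then show ?thesis using that empty
      by (auto simp: bin_nodes_def children_def heap_node_eq_Inl_iff)
  next
    case (Inr b)
    then show ?thesis using that not_big
      by (cases b) (auto simp: bin_nodes_def heap_node_eq_Inl_iff)
  qed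
  then show "children T_nodes T_par (Inl g) (Inl u) = {}"
    by (auto simp: children_def)
qed

lemma leaves_bin_tree: "leaves T_nodes T_par (Inl g) = Inl ` leaves Nd par g"
proof -
  have "z \<in> leaves T_nodes T_par (Inl g) \<longleftrightarrow> z \<in> Inl ` leaves Nd par g" for z
  proof (cases z)
    case (Inl u)
    then show ?thesis
      using children_bin_Inl_eq_empty_iff[of u] by (auto simp: leaves_def bin_nodes_def)
  next
    case (Inr b)
    then show ?thesis
      using Inr_in_bin_nodes_has_child by (cases b) (auto simp: leaves_def)
  qed
  then show ?thesis by blast
qed

lemma load_bin_par_Inl:
  assumes "\<And>e. e \<in> ER \<Longrightarrow> pos (fst e) \<in> Nd \<and> pos (snd e) \<in> Nd"
  shows "load T_par ER f (Inl \<circ> pos) (Inl w) = load par ER f pos w"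
  unfolding load_def on_path_def by (rule sum.cong) (simp_all add: assms anc_bin_par_Inl_iff)

lemma congestion_bin_tree:
  assumes "\<pi> ` V \<subseteq> Nd" and "ER \<subseteq> Some ` V \<times> insert None (Some ` V)"
  shows "congestion T_nodes T_par (Inl g) (bin_cap c) ER f (Inl \<circ> \<pi>) =
    congestion Nd par g (\<lambda>w. ereal (c w)) ER f \<pi>"
proof -
  define pos where "pos = case_option g \<pi>"
  have pos_Inl: "case_option (Inl g) (Inl \<circ> \<pi>) = Inl \<circ> pos"
    unfolding pos_def by (auto split: option.split)
  have "\<And>e. e \<in> ER \<Longrightarrow> pos (fst e) \<in> Nd \<and> pos (snd e) \<in> Nd"
    using assms g_in unfolding pos_def by fastforce
  then have cong_Inl: "edge_cong T_par (bin_cap c) ER f (Inl \<circ> pos) (Inl w) =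
      edge_cong par (\<lambda>w. ereal (c w)) ER f pos w" for w
    unfolding edge_cong_def by (simp add: load_bin_par_Inl)
  have cong_Inr: "edge_cong T_par (bin_cap c) ER f (Inl \<circ> pos) (Inr b) = 0" for b
    unfolding edge_cong_def by (cases b) simp
  have "T_nodes - {Inl g} = Inl ` (Nd - {g}) \<union> (T_nodes \<inter> range Inr)"
    unfolding bin_nodes_def by auto
  then have "insert 0 (edge_cong T_par (bin_cap c) ER f (Inl \<circ> pos) ` (T_nodes - {Inl g})) =
      insert 0 (edge_cong par (\<lambda>w. ereal (c w)) ER f pos ` (Nd - {g}))"
    using cong_Inl cong_Inr by (auto simp: image_Un image_image)
  then show ?thesis unfolding congestion_def pos_Inl pos_def by simp
qed

lemma embedding_bin_tree_iff:
  "embedding T_nodes T_par (Inl g) V \<pi>' \<longleftrightarrow>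
    (\<exists>\<pi>. embedding Nd par g V \<pi> \<and> (\<forall>v\<in>V. \<pi>' v = Inl (\<pi> v)))"
proof
  assume emb: "embedding T_nodes T_par (Inl g) V \<pi>'"
  then have im: "\<pi>' ` V \<subseteq> Inl ` leaves Nd par g"
    by (simp add: embedding_def leaves_bin_tree)
  then have eq: "\<forall>v\<in>V. \<pi>' v = Inl (projl (\<pi>' v))" by force
  have "inj_on (projl \<circ> \<pi>') V"
    using emb eq unfolding embedding_def inj_on_def by (metis comp_apply)
  moreover have "(projl \<circ> \<pi>') ` V \<subseteq> leaves Nd par g" using im by force
  ultimately show "\<exists>\<pi>. embedding Nd par g V \<pi> \<and> (\<forall>v\<in>V. \<pi>' v = Inl (\<pi> v))"
    using eq unfolding embedding_def by (metis comp_apply)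
next
  assume "\<exists>\<pi>. embedding Nd par g V \<pi> \<and> (\<forall>v\<in>V. \<pi>' v = Inl (\<pi> v))"
  then obtain \<pi> where emb: "embedding Nd par g V \<pi>" and eq: "\<forall>v\<in>V. \<pi>' v = Inl (\<pi> v)"
    by blast
  have "inj_on (Inl \<circ> \<pi>) V"
    using emb by (auto simp: embedding_def intro: comp_inj_on)
  then have "inj_on \<pi>' V" using eq unfolding inj_on_def by simp
  moreover have "\<pi>' ` V \<subseteq> Inl ` leaves Nd par g" using emb eq by (auto simp: embedding_def)
  ultimately show "embedding T_nodes T_par (Inl g) V \<pi>'"
    by (simp add: embedding_def leaves_bin_tree)
qed

lemma congestion_bin_tree_embedding:
  assumes "embedding Nd par g V \<pi>" and "ER \<subseteq> Some ` V \<times> insert None (Some ` V)"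
  shows "congestion T_nodes T_par (Inl g) (bin_cap c) ER f (Inl \<circ> \<pi>) =
    congestion Nd par g (\<lambda>w. ereal (c w)) ER f \<pi>"
  using assms by (intro congestion_bin_tree) (auto simp: embedding_def leaves_def)

lemma congestions_bin_tree:
  assumes ER: "ER \<subseteq> Some ` V \<times> insert None (Some ` V)"
  shows "congestion T_nodes T_par (Inl g) (bin_cap c) ER f ` {\<pi>'. embedding T_nodes T_par (Inl g) V \<pi>'}
    = congestion Nd par g (\<lambda>w. ereal (c w)) ER f ` {\<pi>. embedding Nd par g V \<pi>}"
    (is "?CT ` ?ET = ?CN ` ?EN")
proof (intro equalityI subsetI)
  fix r assume "r \<in> ?CT ` ?ET"
  then obtain \<pi>' where r: "r = ?CT \<pi>'" and "\<pi>' \<in> ?ET" by blast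
  then obtain \<pi> where \<pi>: "\<pi> \<in> ?EN" and eq: "\<forall>v\<in>V. \<pi>' v = (Inl \<circ> \<pi>) v"
    unfolding mem_Collect_eq embedding_bin_tree_iff comp_apply by blast
  have "?CT \<pi>' = ?CT (Inl \<circ> \<pi>)"
    by (rule congestion_cong[OF ER eq])
  also have "\<dots> = ?CN \<pi>"
    using congestion_bin_tree_embedding[OF _ ER] \<pi> by simp
  finally show "r \<in> ?CN ` ?EN" using r \<pi> by (metis image_eqI)
next
  fix r assume "r \<in> ?CN ` ?EN"
  then obtain \<pi> where r: "r = ?CN \<pi>" and \<pi>: "\<pi> \<in> ?EN" by blast
  then have "Inl \<circ> \<pi> \<in> ?ET"
    unfolding mem_Collect_eq embedding_bin_tree_iff by auto
  moreover have "r = ?CT (Inl \<circ> \<pi>)"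
    using congestion_bin_tree_embedding[OF _ ER] \<pi> r by simp
  ultimately show "r \<in> ?CT ` ?ET" by (metis image_eqI)
qed

end

theorem lemma1:
  fixes Nd :: "'n set" and par :: "'n \<Rightarrow> 'n" and g :: 'n
    and c :: "'n \<Rightarrow> real" and idx :: "'n \<Rightarrow> nat"
    and V :: "'v set" and ER :: "('v option \<times> 'v option) set"
    and f :: "'v option \<times> 'v option \<Rightarrow> real"
  assumes tree: "rooted_tree Nd par g"
    and cap_pos: "\<forall>w\<in>Nd - {g}. c w > 0"
    and idx: "\<forall>v\<in>Nd. bij_betw idx (children Nd par g v) {1..card (children Nd par g v)}"
    and req: "request_graph V ER f"
  shows "leaves (bin_nodes Nd par g) (bin_par Nd par g idx) (Inl g) = Inl ` leaves Nd par g
    \<and> (\<forall>\<pi>. embedding Nd par g V \<pi> \<longrightarrow>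
          congestion Nd par g (\<lambda>w. ereal (c w)) ER f \<pi> =
          congestion (bin_nodes Nd par g) (bin_par Nd par g idx) (Inl g) (bin_cap c) ER f (Inl \<circ> \<pi>))
    \<and> min_congestion Nd par g (\<lambda>w. ereal (c w)) V ER f =
      min_congestion (bin_nodes Nd par g) (bin_par Nd par g idx) (Inl g) (bin_cap c) V ER f"
proof -
  interpret binarization Nd par g idx
    using tree idx by unfold_locales
  have ER: "ER \<subseteq> Some ` V \<times> insert None (Some ` V)"
    using req by (simp add: request_graph_def)
  show ?thesis
    unfolding min_congestion_def congestions_bin_tree[OF ER]
    using leaves_bin_tree congestion_bin_tree_embedding[OF _ ER] by simp
qed

end
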